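(* Let $X$ be an $n$-dimensional polyhedral normed space and let $Y \subseteq X$ be a subspace of dimension $k$, where $1 \leq k \leq n-1$. Suppose that some $P_0 \in \mathcal{P}_{\min}(X, Y)$ has at most $m$ norming pairs. Then $\dim \mathcal{P}_{\min}(X, Y) \geq k(n-k)-m+1$.
   Context: A normed space $X=(\mathbb{R}^n,\|\cdot\|)$ is polyhedral if its unit ball is a convex polytope. A projection onto $Y$ is a linear $P:X\to Y$ with $P|_Y=\mathrm{id}_Y$; $\lambda(Y,X)$ is the infimum of the operator norms of projections and $\mathcal{P}_{\min}(X,Y)$ the set of projections of norm $\lambda(Y,X)$; $\dim\mathcal{P}_{\min}(X,Y)$ is the affine dimension of this convex subset of $\mathcal{L}(X,X)$. A norming pair for a projection $P$ is a pair $(x,f)\in \mathrm{ext}\,B_X\times \mathrm{ext}\,B_{X^*}$ (extreme points of the unit balls of $X$ and $X^*$) with $f(P(x))=\|P\|$. *)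

theory Defs
  imports "HOL-Analysis.Analysis"
begin

definition is_norm :: "(real ^ 'n \<Rightarrow> real) \<Rightarrow> bool" where
  "is_norm N \<longleftrightarrow> (\<forall>x. N x \<ge> 0) \<and> (\<forall>x. N x = 0 \<longleftrightarrow> x = 0) \<and>
     (\<forall>x y. N (x + y) \<le> N x + N y) \<and> (\<forall>c x. N (c *\<^sub>R x) = \<bar>c\<bar> * N x)"

definition unit_ball :: "(real ^ 'n \<Rightarrow> real) \<Rightarrow> (real ^ 'n) set" where
  "unit_ball N = {x. N x \<le> 1}"

definition polyhedral_norm :: "(real ^ 'n \<Rightarrow> real) \<Rightarrow> bool" where
  "polyhedral_norm N \<longleftrightarrow> is_norm N \<and> polytope (unit_ball N)"

text \<open>Unit ball of the dual space; a functional f is represented by the vector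
  v with f x = v \<bullet> x.\<close>
definition dual_unit_ball :: "(real ^ 'n \<Rightarrow> real) \<Rightarrow> (real ^ 'n) set" where
  "dual_unit_ball N = {v. \<forall>x. N x \<le> 1 \<longrightarrow> v \<bullet> x \<le> 1}"

definition op_norm :: "(real ^ 'n \<Rightarrow> real) \<Rightarrow> real ^ 'n ^ 'n \<Rightarrow> real" where
  "op_norm N P = Sup ((\<lambda>x. N (P *v x)) ` unit_ball N)"

definition projections :: "(real ^ 'n) set \<Rightarrow> (real ^ 'n ^ 'n) set" where
  "projections Y = {P. (\<forall>x. P *v x \<in> Y) \<and> (\<forall>y\<in>Y. P *v y = y)}"

definition proj_const :: "(real ^ 'n \<Rightarrow> real) \<Rightarrow> (real ^ 'n) set \<Rightarrow> real" where
  "proj_const N Y = Inf (op_norm N ` projections Y)"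

definition min_projections :: "(real ^ 'n \<Rightarrow> real) \<Rightarrow> (real ^ 'n) set \<Rightarrow> (real ^ 'n ^ 'n) set" where
  "min_projections N Y = {P \<in> projections Y. op_norm N P = proj_const N Y}"

definition norming_pairs :: "(real ^ 'n \<Rightarrow> real) \<Rightarrow> real ^ 'n ^ 'n \<Rightarrow> ((real ^ 'n) \<times> (real ^ 'n)) set" where
  "norming_pairs N P = {(x, f). (x extreme_point_of (unit_ball N)) \<and>
      (f extreme_point_of (dual_unit_ball N)) \<and> f \<bullet> (P *v x) = op_norm N P}"

end

theory Submission
  imports Defs
begin

text \<open>Since both unit balls are polytopes, \<open>\<parallel>P\<parallel>\<close> is the maximum of the finitely many linear
  functionals \<open>P \<mapsto> f (P x)\<close> over pairs of extreme points \<open>(x, f)\<close>. The pairs that do not norm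
  \<open>P\<^sub>0\<close> stay strictly below \<open>\<lambda>(Y, X)\<close> near \<open>P\<^sub>0\<close>, so \<open>P\<^sub>0 + A\<close> is still minimal for every small
  \<open>A\<close> that lies in the \<open>k(n - k)\<close>-dimensional space of differences of projections onto \<open>Y\<close>
  and is orthogonal to the rank-one matrices \<open>f \<otimes> x\<close> of the norming pairs. As \<open>(x, f)\<close> and
  \<open>(-x, -f)\<close> give the same matrix, at most \<open>m / 2 \<le> m - 1\<close> independent constraints arise.\<close>

definition outer_prod :: "real^'n \<Rightarrow> real^'m \<Rightarrow> real^'m^'n" where
  "outer_prod u w = (\<chi> i j. u$i * w$j)"

lemma inner_outer_prod: "outer_prod f x \<bullet> A = f \<bullet> (A *v x)"
  by (simp add: outer_prod_def inner_vec_def matrix_vector_mult_def sum_distrib_left mult_ac)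

lemma outer_prod_mult_vector: "outer_prod u w *v x = (w \<bullet> x) *\<^sub>R u"
  by (simp add: outer_prod_def inner_vec_def matrix_vector_mult_def vec_eq_iff sum_distrib_left mult_ac)

lemma inner_outer_prod_outer_prod: "outer_prod a b \<bullet> outer_prod c d = (a \<bullet> c) * (b \<bullet> d)"
  by (simp add: outer_prod_def inner_vec_def sum_distrib_left sum_distrib_right mult_ac)

lemma outer_prod_minus_minus [simp]: "outer_prod (- u) (- w) = outer_prod u w"
  by (simp add: outer_prod_def)

lemma card_image_le_half:
  assumes "finite S" and "\<And>p. p \<in> S \<Longrightarrow> \<exists>q\<in>S. q \<noteq> p \<and> g q = g p"
  shows "2 * card (g ` S) \<le> card S"
proof -
  have fibre: "2 \<le> card {p \<in> S. g p = w}" if "w \<in> g ` S" for w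
  proof -
    obtain p where p: "p \<in> S" "g p = w" using \<open>w \<in> g ` S\<close> by blast
    then obtain q where "q \<in> S" "q \<noteq> p" "g q = w" using assms(2) by blast
    then have "{p, q} \<subseteq> {p \<in> S. g p = w}" using p by auto
    with \<open>q \<noteq> p\<close> show ?thesis
      using card_mono[of "{p \<in> S. g p = w}" "{p, q}"] assms(1) by auto
  qed
  have "2 * card (g ` S) = (\<Sum>w\<in>g ` S. 2)" by simp
  also have "\<dots> \<le> (\<Sum>w\<in>g ` S. card {p \<in> S. g p = w})" using fibre by (rule sum_mono)
  also have "\<dots> = card S"
    unfolding card_eq_sum by (rule sum.image_gen[OF assms(1), symmetric])
  finally show ?thesis .
qed

lemma dim_le_dim_Int_orthogonal_add_card:
  fixes S :: "'a::euclidean_space set"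
  assumes "subspace S" and "finite W"
  shows "dim S \<le> dim (S \<inter> {v. \<forall>w\<in>W. w \<bullet> v = 0}) + card W"
proof -
  let ?K = "{v. \<forall>w\<in>W. w \<bullet> v = 0}"
  have K: "?K = {v \<in> UNIV. \<forall>w\<in>span W. orthogonal w v}"
    by (auto simp: orthogonal_def span_base inner_commute
        dest: orthogonal_to_span[unfolded orthogonal_def, of _ W])
  have "subspace ?K" unfolding K using subspace_orthogonal_to_vectors[of "span W"] by simp
  then have "dim {x + y |x y. x \<in> S \<and> y \<in> ?K} + dim (S \<inter> ?K) = dim S + dim ?K"
    by (rule dim_sums_Int[OF assms(1)])
  moreover have "dim {x + y |x y. x \<in> S \<and> y \<in> ?K} \<le> dim (UNIV :: 'a set)"
    by (rule dim_subset) auto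
  moreover have "dim ?K + dim (span W) = dim (UNIV :: 'a set)"
    unfolding K by (rule dim_subspace_orthogonal_to_vectors) auto
  moreover have "dim (span W) \<le> card W" using assms(2) by (simp add: dim_le_card')
  ultimately show ?thesis by linarith
qed

lemma aff_dim_ge_if_translated_Int_open_subset:
  fixes V :: "'a::euclidean_space set"
  assumes "subspace V" "open U" "0 \<in> U" "(+) a ` (V \<inter> U) \<subseteq> S"
  shows "int (dim V) \<le> aff_dim S"
proof -
  have "int (dim V) = aff_dim (V \<inter> U)"
    using assms(1-3) subspace_0[OF assms(1)]
    by (subst aff_dim_convex_Int_open) (auto simp: subspace_imp_convex aff_dim_subspace)
  also have "\<dots> = aff_dim ((+) a ` (V \<inter> U))" by (rule aff_dim_translation_eq[symmetric])
  also have "\<dots> \<le> aff_dim S" using assms(4) by (rule aff_dim_subset)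
  finally show ?thesis .
qed

lemma extreme_point_of_uminus:
  fixes S :: "'a::real_vector set"
  assumes "\<And>x. x \<in> S \<Longrightarrow> - x \<in> S" and "x extreme_point_of S"
  shows "(- x) extreme_point_of S"
proof -
  have "uminus ` S = S" using assms(1) by (force intro: image_eqI[of _ _ "- _"])
  then show ?thesis
    using face_of_linear_image[OF linear_uminus, of "{x}" S] assms(2)
    by (simp add: face_of_singleton inj_def)
qed

lemma polytope_eq_convex_hull_extreme_points:
  fixes S :: "'a::euclidean_space set"
  assumes "polytope S"
  shows "S = convex hull {x. x extreme_point_of S}"
  using assms by (simp add: Krein_Milman_Minkowski polytope_imp_compact polytope_imp_convex)

lemma polytope_subset_if_extreme_points_subset:
  fixes S :: "'a::euclidean_space set"
  assumes "polytope S" "convex C" "\<And>x. x extreme_point_of S \<Longrightarrow> x \<in> C"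
  shows "S \<subseteq> C"
  using assms polytope_eq_convex_hull_extreme_points[OF assms(1)]
  by (metis hull_minimal mem_Collect_eq subsetI)

lemma finite_polytope_extreme_points:
  fixes S :: "'a::euclidean_space set"
  assumes "polytope S"
  shows "finite {x. x extreme_point_of S}"
  using assms finite_polyhedron_extreme_points polytope_imp_polyhedron by blast

lemma polytope_extreme_point_exists:
  fixes S :: "'a::euclidean_space set"
  assumes "polytope S" "S \<noteq> {}"
  obtains x where "x extreme_point_of S"
  using assms polytope_eq_convex_hull_extreme_points[OF assms(1)] by fastforce

definition projection_directions :: "(real^'n) set \<Rightarrow> (real^'n^'n) set" where
  "projection_directions Y = {A. (\<forall>x. A *v x \<in> Y) \<and> (\<forall>y\<in>Y. A *v y = 0)}"

lemma subspace_projection_directions: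
  assumes "subspace Y"
  shows "subspace (projection_directions Y)"
  using assms
  by (auto simp: subspace_def projection_directions_def matrix_vector_mult_add_rdistrib
      scaleR_matrix_vector_assoc[symmetric])

lemma projections_add_direction:
  assumes "subspace Y" "P \<in> projections Y" "A \<in> projection_directions Y"
  shows "P + A \<in> projections Y"
  using assms
  by (auto simp: projections_def projection_directions_def matrix_vector_mult_add_rdistrib
      subspace_add)

lemma dim_projection_directions_ge:
  assumes Y: "subspace (Y :: (real^'n) set)"
  shows "dim Y * (CARD('n) - dim Y) \<le> dim (projection_directions Y)"
proof -
  define Z where "Z = {z. \<forall>y\<in>Y. orthogonal y z}"
  have "dim {z \<in> UNIV. \<forall>y\<in>Y. orthogonal y z} + dim Y = dim (UNIV :: (real^'n) set)"
    by (rule dim_subspace_orthogonal_to_vectors) (use Y in auto)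
  then have dim_Z: "dim Z = CARD('n) - dim Y" unfolding Z_def by simp
  obtain BY where BY: "BY \<subseteq> Y" "pairwise orthogonal BY" "\<And>x. x \<in> BY \<Longrightarrow> norm x = 1"
      "independent BY" "card BY = dim Y"
    using orthonormal_basis_subspace[OF Y] by metis
  have "subspace Z" unfolding Z_def by (rule subspace_orthogonal_to_vectors)
  then obtain BZ where BZ: "BZ \<subseteq> Z" "pairwise orthogonal BZ" "\<And>x. x \<in> BZ \<Longrightarrow> norm x = 1"
      "independent BZ" "card BZ = dim Z"
    using orthonormal_basis_subspace by metis
  let ?g = "\<lambda>(b, c). outer_prod b c"
  let ?E = "?g ` (BY \<times> BZ)"
  have unit: "x \<bullet> x = 1" if "x \<in> BY \<or> x \<in> BZ" for x
    using that BY(3) BZ(3) norm_eq_1 by blast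
  have orthogonal_Y: "b \<bullet> b' = 0" if "b \<in> BY" "b' \<in> BY" "b \<noteq> b'" for b b'
    using BY(2) that by (auto simp: pairwise_def orthogonal_def)
  have orthogonal_Z: "c \<bullet> c' = 0" if "c \<in> BZ" "c' \<in> BZ" "c \<noteq> c'" for c c'
    using BZ(2) that by (auto simp: pairwise_def orthogonal_def)
  have orthonormal: "?g p \<bullet> ?g q = (if p = q then 1 else 0)"
    if "p \<in> BY \<times> BZ" "q \<in> BY \<times> BZ" for p q
  proof -
    obtain b c b' c' where "p = (b, c)" "q = (b', c')" by fastforce
    then show ?thesis
      using that unit orthogonal_Y orthogonal_Z by (auto simp: inner_outer_prod_outer_prod)
  qed
  then have "inj_on ?g (BY \<times> BZ)"
    by (intro inj_onI) (metis zero_neq_one)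
  then have "card ?E = dim Y * (CARD('n) - dim Y)"
    by (simp add: card_image card_cartesian_product BY(5) BZ(5) dim_Z)
  moreover have "independent ?E"
  proof (rule pairwise_orthogonal_independent)
    show "pairwise orthogonal ?E"
      using orthonormal unfolding pairwise_def orthogonal_def by fastforce
    show "0 \<notin> ?E"
      using orthonormal by force
  qed
  moreover have "?E \<subseteq> projection_directions Y"
    using BY(1) BZ(1) Y
    by (auto simp: projection_directions_def Z_def orthogonal_def inner_commute
        outer_prod_mult_vector subspace_scale)
  ultimately show ?thesis using independent_card_le_dim by metis
qed

locale cart_norm =
  fixes N :: "real^'n \<Rightarrow> real"
  assumes is_norm: "is_norm N"
begin

lemma N_nonneg: "0 \<le> N x"
  using is_norm by (simp add: is_norm_def)

lemma N_eq_0_iff [simp]: "N x = 0 \<longleftrightarrow> x = 0"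
  using is_norm by (simp add: is_norm_def)

lemma N_zero [simp]: "N 0 = 0"
  by simp

lemma N_triangle: "N (x + y) \<le> N x + N y"
  using is_norm by (simp add: is_norm_def)

lemma N_scaleR: "N (c *\<^sub>R x) = \<bar>c\<bar> * N x"
  using is_norm by (simp add: is_norm_def)

lemma N_uminus [simp]: "N (- x) = N x"
  using N_scaleR[of "-1" x] by simp

lemma convex_N_le: "convex {x. N x \<le> c}"
proof (rule convexI, simp)
  fix x y :: "real^'n" and u v :: real
  assume "N x \<le> c" "N y \<le> c" "0 \<le> u" "0 \<le> v" "u + v = 1"
  then have "u * N x + v * N y \<le> c"
    by (metis convex_bound_le)
  then show "N (u *\<^sub>R x + v *\<^sub>R y) \<le> c"
    using N_triangle[of "u *\<^sub>R x" "v *\<^sub>R y"] \<open>0 \<le> u\<close> \<open>0 \<le> v\<close> by (simp add: N_scaleR)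
qed

lemma convex_N_matrix_vector_mult_le: "convex {x. N (M *v x) \<le> c}"
  using convex_linear_vimage[OF matrix_vector_mul_linear convex_N_le, of M c] by (simp add: vimage_def)

lemma zero_in_unit_ball: "0 \<in> unit_ball N"
  by (simp add: unit_ball_def)

lemma uminus_in_unit_ball: "x \<in> unit_ball N \<Longrightarrow> - x \<in> unit_ball N"
  by (simp add: unit_ball_def)

lemma zero_in_dual_unit_ball: "0 \<in> dual_unit_ball N"
  by (simp add: dual_unit_ball_def)

lemma uminus_in_dual_unit_ball:
  assumes "f \<in> dual_unit_ball N"
  shows "- f \<in> dual_unit_ball N"
proof -
  have "f \<bullet> (- x) \<le> 1" if "N (- x) \<le> 1" for x
    using assms that unfolding dual_unit_ball_def by blast
  then show ?thesis by (simp add: dual_unit_ball_def)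
qed

lemma inner_le_N_if_in_dual_unit_ball:
  assumes "f \<in> dual_unit_ball N"
  shows "f \<bullet> y \<le> N y"
proof (cases "y = 0")
  case False
  then have "N y > 0" using N_nonneg[of y] by (simp add: order_le_less)
  moreover have "N ((1 / N y) *\<^sub>R y) \<le> 1" using \<open>N y > 0\<close> by (simp add: N_scaleR)
  then have "f \<bullet> ((1 / N y) *\<^sub>R y) \<le> 1"
    using assms unfolding dual_unit_ball_def by blast
  ultimately have "(f \<bullet> y) / N y \<le> 1" by simp
  then show ?thesis using \<open>N y > 0\<close> by (simp add: divide_le_eq)
qed simp

lemma zero_not_extreme_point_unit_ball: "\<not> 0 extreme_point_of unit_ball N"
proof
  assume extreme: "0 extreme_point_of unit_ball N"
  obtain b :: "real^'n" where "b \<in> Basis" using nonempty_Basis by blast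
  define e where "e = (1 / N b) *\<^sub>R b"
  have "e \<noteq> 0" and "e \<in> unit_ball N"
    using nonzero_Basis[OF \<open>b \<in> Basis\<close>] by (auto simp: e_def unit_ball_def N_scaleR)
  then have "e \<noteq> - e" by (auto simp: vec_eq_iff)
  then have "midpoint e (- e) \<in> open_segment e (- e)" by simp
  moreover have "midpoint e (- e) = 0" by (simp add: midpoint_def)
  ultimately show False
    using extreme \<open>e \<in> unit_ball N\<close> uminus_in_unit_ball unfolding extreme_point_of_def by metis
qed

end

definition norming_matrices :: "(real^'n \<Rightarrow> real) \<Rightarrow> real^'n^'n \<Rightarrow> (real^'n^'n) set" where
  "norming_matrices N P = (\<lambda>(x, f). outer_prod f x) ` norming_pairs N P"

locale polyhedral_cart_norm =
  fixes N :: "real^'n \<Rightarrow> real"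
  assumes polyhedral: "polyhedral_norm N"
begin

sublocale cart_norm
  using polyhedral by unfold_locales (simp add: polyhedral_norm_def)

lemma polytope_unit_ball: "polytope (unit_ball N)"
  using polyhedral by (simp add: polyhedral_norm_def)

lemma dual_unit_ball_eq_Inter:
  "dual_unit_ball N = (\<Inter>x\<in>{x. x extreme_point_of unit_ball N}. {f. x \<bullet> f \<le> 1})"
proof (intro equalityI subsetI)
  fix f assume "f \<in> dual_unit_ball N"
  then show "f \<in> (\<Inter>x\<in>{x. x extreme_point_of unit_ball N}. {f. x \<bullet> f \<le> 1})"
    by (auto simp: dual_unit_ball_def unit_ball_def extreme_point_of_def inner_commute)
next
  fix f assume "f \<in> (\<Inter>x\<in>{x. x extreme_point_of unit_ball N}. {f. x \<bullet> f \<le> 1})"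
  then have "unit_ball N \<subseteq> {x. f \<bullet> x \<le> 1}"
    by (intro polytope_subset_if_extreme_points_subset polytope_unit_ball convex_halfspace_le)
      (auto simp: inner_commute)
  then show "f \<in> dual_unit_ball N"
    by (auto simp: dual_unit_ball_def unit_ball_def)
qed

lemma bounded_dual_unit_ball: "bounded (dual_unit_ball N)"
  unfolding bounded_iff
proof (intro exI ballI)
  fix f assume f: "f \<in> dual_unit_ball N"
  have "\<bar>f $ i\<bar> \<le> N (axis i 1)" for i
    using inner_le_N_if_in_dual_unit_ball[OF f, of "axis i 1"]
      inner_le_N_if_in_dual_unit_ball[OF f, of "- axis i 1"]
    by (simp add: inner_axis)
  then have "(\<Sum>i\<in>UNIV. \<bar>f $ i\<bar>) \<le> (\<Sum>i\<in>UNIV. N (axis i 1))" by (rule sum_mono)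
  then show "norm f \<le> (\<Sum>i\<in>UNIV. N (axis i 1))" using norm_le_l1_cart[of f] by linarith
qed

lemma polytope_dual_unit_ball: "polytope (dual_unit_ball N)"
proof -
  have "polyhedron (dual_unit_ball N)"
    unfolding dual_unit_ball_eq_Inter
    using finite_polytope_extreme_points[OF polytope_unit_ball]
    by (intro polyhedron_Inter) (auto simp: polyhedron_halfspace_le)
  then show ?thesis
    using bounded_dual_unit_ball polytope_eq_bounded_polyhedron by blast
qed

lemma N_le_if_dual_unit_ball_inner_le:
  assumes "\<And>f. f \<in> dual_unit_ball N \<Longrightarrow> f \<bullet> z \<le> c"
  shows "N z \<le> c"
proof (rule ccontr)
  assume "\<not> N z \<le> c"
  moreover have "0 \<le> c" using assms[OF zero_in_dual_unit_ball] by simp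
  ultimately obtain s where s: "c < s" "s < N z" "0 < s"
    using dense[of c "N z"] by force
  define y where "y = (1 / s) *\<^sub>R z"
  have "y \<notin> unit_ball N" using s by (simp add: y_def unit_ball_def N_scaleR)
  moreover have "closed (unit_ball N)" "convex (unit_ball N)"
    using polytope_unit_ball polytope_imp_compact compact_imp_closed polytope_imp_convex by blast+
  ultimately obtain a b where ab: "a \<bullet> y < b" "\<And>x. x \<in> unit_ball N \<Longrightarrow> b < a \<bullet> x"
    by (metis separating_hyperplane_closed_point)
  have "b < 0" using ab(2)[OF zero_in_unit_ball] by simp
  define f where "f = (1 / b) *\<^sub>R a"
  have "f \<in> dual_unit_ball N"
    using ab(2) \<open>b < 0\<close> by (auto simp: dual_unit_ball_def unit_ball_def f_def divide_less_eq less_imp_le)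
  moreover have "1 < f \<bullet> y" using ab(1) \<open>b < 0\<close> by (simp add: f_def less_divide_eq)
  then have "s < f \<bullet> z" using s by (simp add: y_def)
  ultimately show False using assms s by force
qed

lemma N_le_if_extreme_dual_inner_le:
  assumes "\<And>f. f extreme_point_of dual_unit_ball N \<Longrightarrow> f \<bullet> z \<le> c"
  shows "N z \<le> c"
proof (rule N_le_if_dual_unit_ball_inner_le)
  have "dual_unit_ball N \<subseteq> {f. z \<bullet> f \<le> c}"
    using assms
    by (intro polytope_subset_if_extreme_points_subset polytope_dual_unit_ball convex_halfspace_le)
      (simp add: inner_commute)
  then show "f \<bullet> z \<le> c" if "f \<in> dual_unit_ball N" for f
    using that by (auto simp: inner_commute)
qed

lemma N_matrix_vector_mult_le_if_extreme:
  assumes "\<And>x. x extreme_point_of unit_ball N \<Longrightarrow> N (M *v x) \<le> c" "x \<in> unit_ball N"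
  shows "N (M *v x) \<le> c"
  using polytope_subset_if_extreme_points_subset[OF polytope_unit_ball
      convex_N_matrix_vector_mult_le[of M c]] assms
  by blast

lemma bdd_above_N_matrix_vector_mult: "bdd_above ((\<lambda>x. N (M *v x)) ` unit_ball N)"
proof -
  let ?c = "\<Sum>x\<in>{x. x extreme_point_of unit_ball N}. N (M *v x)"
  have "N (M *v x) \<le> ?c" if "x extreme_point_of unit_ball N" for x
    using finite_polytope_extreme_points[OF polytope_unit_ball] that
    by (intro member_le_sum) (simp_all add: N_nonneg)
  then have "N (M *v x) \<le> ?c" if "x \<in> unit_ball N" for x
    using that by (rule N_matrix_vector_mult_le_if_extreme)
  then show ?thesis by (auto simp: bdd_above_def)
qed

lemma N_matrix_vector_mult_le_op_norm: "x \<in> unit_ball N \<Longrightarrow> N (M *v x) \<le> op_norm N M"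
  unfolding op_norm_def by (rule cSup_upper) (auto intro: bdd_above_N_matrix_vector_mult)

lemma op_norm_nonneg: "0 \<le> op_norm N M"
  using N_matrix_vector_mult_le_op_norm[OF zero_in_unit_ball, of M] by simp

lemma inner_le_op_norm:
  assumes "x \<in> unit_ball N" "f \<in> dual_unit_ball N"
  shows "f \<bullet> (M *v x) \<le> op_norm N M"
  using inner_le_N_if_in_dual_unit_ball[OF assms(2)] N_matrix_vector_mult_le_op_norm[OF assms(1)]
  by (rule order_trans)

lemma op_norm_le_if_extreme_pairs:
  assumes "\<And>x f. x extreme_point_of unit_ball N \<Longrightarrow> f extreme_point_of dual_unit_ball N
             \<Longrightarrow> f \<bullet> (M *v x) \<le> c"
  shows "op_norm N M \<le> c"
proof -
  have "N (M *v x) \<le> c" if "x extreme_point_of unit_ball N" for x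
    by (rule N_le_if_extreme_dual_inner_le) (rule assms[OF that])
  then have "N (M *v x) \<le> c" if "x \<in> unit_ball N" for x
    using that by (rule N_matrix_vector_mult_le_if_extreme)
  then show ?thesis
    unfolding op_norm_def using zero_in_unit_ball by (auto intro!: cSup_least)
qed

lemma proj_const_le_op_norm: "P \<in> projections Y \<Longrightarrow> proj_const N Y \<le> op_norm N P"
  unfolding proj_const_def by (rule cInf_lower) (auto intro: op_norm_nonneg simp: bdd_below_def)

lemma finite_extreme_pair_values:
  "finite {f \<bullet> (M *v x) |x f. x extreme_point_of unit_ball N \<and> f extreme_point_of dual_unit_ball N}"
  using finite_polytope_extreme_points[OF polytope_unit_ball]
    finite_polytope_extreme_points[OF polytope_dual_unit_ball]
  by (rule finite_image_set2)

lemma extreme_pair_values_nonempty: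
  "{f \<bullet> (M *v x) |x f. x extreme_point_of unit_ball N \<and> f extreme_point_of dual_unit_ball N} \<noteq> {}"
proof -
  obtain x where "x extreme_point_of unit_ball N"
    using polytope_extreme_point_exists[OF polytope_unit_ball] zero_in_unit_ball by blast
  moreover obtain f where "f extreme_point_of dual_unit_ball N"
    using polytope_extreme_point_exists[OF polytope_dual_unit_ball] zero_in_dual_unit_ball by blast
  ultimately show ?thesis by blast
qed

lemma op_norm_eq_Max_extreme_pairs:
  "op_norm N M = Max {f \<bullet> (M *v x) |x f. x extreme_point_of unit_ball N \<and> f extreme_point_of dual_unit_ball N}"
    (is "_ = Max ?V")
proof (rule antisym)
  show "op_norm N M \<le> Max ?V"
    by (rule op_norm_le_if_extreme_pairs, rule Max_ge[OF finite_extreme_pair_values]) blast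
  have "Max ?V \<in> ?V"
    using finite_extreme_pair_values extreme_pair_values_nonempty by (rule Max_in)
  then show "Max ?V \<le> op_norm N M"
    by (auto simp: extreme_point_of_def intro: inner_le_op_norm)
qed

lemma norming_pairs_nonempty: "norming_pairs N P \<noteq> {}"
proof -
  have "op_norm N P \<in> {f \<bullet> (P *v x) |x f. x extreme_point_of unit_ball N \<and> f extreme_point_of dual_unit_ball N}"
    unfolding op_norm_eq_Max_extreme_pairs
    using finite_extreme_pair_values extreme_pair_values_nonempty by (rule Max_in)
  then show ?thesis by (force simp: norming_pairs_def)
qed

lemma finite_norming_pairs: "finite (norming_pairs N P)"
proof (rule finite_subset)
  show "norming_pairs N P \<subseteq> {x. x extreme_point_of unit_ball N} \<times> {f. f extreme_point_of dual_unit_ball N}"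
    by (auto simp: norming_pairs_def)
qed (simp add: finite_polytope_extreme_points polytope_unit_ball polytope_dual_unit_ball)

lemma uminus_in_norming_pairs:
  assumes "(x, f) \<in> norming_pairs N P"
  shows "(- x, - f) \<in> norming_pairs N P"
  using assms extreme_point_of_uminus[of "unit_ball N" x] extreme_point_of_uminus[of "dual_unit_ball N" f]
    uminus_in_unit_ball uminus_in_dual_unit_ball
  by (auto simp: norming_pairs_def linear_neg[OF matrix_vector_mul_linear])

lemma card_norming_matrices_le_half: "2 * card (norming_matrices N P) \<le> card (norming_pairs N P)"
  unfolding norming_matrices_def
proof (rule card_image_le_half[OF finite_norming_pairs])
  fix p assume p: "p \<in> norming_pairs N P"
  obtain x f where xf: "p = (x, f)" by fastforce
  have "x \<noteq> 0" using p zero_not_extreme_point_unit_ball by (auto simp: xf norming_pairs_def)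
  then have "(- x, - f) \<noteq> p" by (auto simp: xf vec_eq_iff)
  moreover have "(- x, - f) \<in> norming_pairs N P" using p xf uminus_in_norming_pairs by simp
  ultimately show "\<exists>q\<in>norming_pairs N P. q \<noteq> p \<and> (\<lambda>(x, f). outer_prod f x) q = (\<lambda>(x, f). outer_prod f x) p"
    by (intro bexI[of _ "(- x, - f)"]) (simp_all add: xf)
qed

lemma norming_matrices_nonempty: "norming_matrices N P \<noteq> {}"
  using norming_pairs_nonempty by (simp add: norming_matrices_def)

lemma finite_norming_matrices: "finite (norming_matrices N P)"
  using finite_norming_pairs by (simp add: norming_matrices_def)

lemma eventually_op_norm_add_le:
  "\<forall>\<^sub>F A in nhds 0. (\<forall>w\<in>norming_matrices N P. w \<bullet> A = 0) \<longrightarrow> op_norm N (P + A) \<le> op_norm N P"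
proof -
  let ?lam = "op_norm N P"
  define Q where "Q = {(x, f). x extreme_point_of unit_ball N \<and> f extreme_point_of dual_unit_ball N}
    - norming_pairs N P"
  define U where "U = (\<Inter>(x, f)\<in>Q. {A. outer_prod f x \<bullet> A < ?lam - f \<bullet> (P *v x)})"
  have "finite Q"
    using finite_polytope_extreme_points[OF polytope_unit_ball]
      finite_polytope_extreme_points[OF polytope_dual_unit_ball]
    by (auto simp: Q_def intro: finite_subset[of _ "{x. _ x} \<times> {f. _ f}"])
  then have "open U" by (auto simp: U_def open_halfspace_lt)
  have "f \<bullet> (P *v x) < ?lam" if "(x, f) \<in> Q" for x f
    using that inner_le_op_norm[of x f P]
    by (fastforce simp: Q_def norming_pairs_def extreme_point_of_def)
  then have "0 \<in> U" by (auto simp: U_def)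
  have "op_norm N (P + A) \<le> ?lam" if A: "A \<in> U" "\<forall>w\<in>norming_matrices N P. w \<bullet> A = 0" for A
  proof (rule op_norm_le_if_extreme_pairs)
    fix x f assume extreme: "x extreme_point_of unit_ball N" "f extreme_point_of dual_unit_ball N"
    have split: "f \<bullet> ((P + A) *v x) = f \<bullet> (P *v x) + outer_prod f x \<bullet> A"
      by (simp add: matrix_vector_mult_add_rdistrib inner_add_right inner_outer_prod)
    show "f \<bullet> ((P + A) *v x) \<le> ?lam"
    proof (cases "(x, f) \<in> norming_pairs N P")
      case True
      then have "outer_prod f x \<bullet> A = 0"
        using A(2) by (force simp: norming_matrices_def)
      with True show ?thesis by (simp add: split norming_pairs_def)
    next
      case False
      then have "(x, f) \<in> Q" using extreme by (simp add: Q_def)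
      then show ?thesis using A(1) by (force simp: split U_def)
    qed
  qed
  with \<open>open U\<close> \<open>0 \<in> U\<close> show ?thesis
    unfolding eventually_nhds by blast
qed

lemma aff_dim_min_projections_ge:
  assumes "subspace Y" "P0 \<in> min_projections N Y"
  shows "int (dim (projection_directions Y \<inter> {A. \<forall>w\<in>norming_matrices N P0. w \<bullet> A = 0}))
           \<le> aff_dim (min_projections N Y)"
    (is "int (dim ?V) \<le> _")
proof -
  obtain U where "open U" "0 \<in> U"
    and U: "\<And>A. A \<in> U \<Longrightarrow> (\<forall>w\<in>norming_matrices N P0. w \<bullet> A = 0) \<Longrightarrow>
                op_norm N (P0 + A) \<le> op_norm N P0"
    using eventually_op_norm_add_le[of P0] unfolding eventually_nhds by blast
  have "subspace ?V"
    using subspace_projection_directions[OF assms(1)]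
    by (intro subspace_inter) (auto simp: subspace_def inner_add_right)
  moreover note \<open>open U\<close> \<open>0 \<in> U\<close>
  moreover have "(+) P0 ` (?V \<inter> U) \<subseteq> min_projections N Y"
  proof clarify
    fix A assume A: "A \<in> projection_directions Y" "\<forall>w\<in>norming_matrices N P0. w \<bullet> A = 0" "A \<in> U"
    have projection: "P0 + A \<in> projections Y"
      using assms A(1) by (intro projections_add_direction) (auto simp: min_projections_def)
    have "op_norm N (P0 + A) \<le> proj_const N Y"
      using U[OF A(3,2)] assms(2) by (simp add: min_projections_def)
    with projection proj_const_le_op_norm[OF projection] show "P0 + A \<in> min_projections N Y"
      by (simp add: min_projections_def)
  qed
  ultimately show ?thesis by (rule aff_dim_ge_if_translated_Int_open_subset)
qed

end

theorem mainTheorem9: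
  fixes N :: "real ^ 'n \<Rightarrow> real" and Y :: "(real ^ 'n) set"
    and k m :: nat and P0 :: "real ^ 'n ^ 'n"
  assumes "polyhedral_norm N"
    and "subspace Y" and "dim Y = k" and "1 \<le> k" and "k \<le> CARD('n) - 1"
    and "P0 \<in> min_projections N Y"
    and "card (norming_pairs N P0) \<le> m"
  shows "aff_dim (min_projections N Y) \<ge> int (k * (CARD('n) - k)) - int m + 1"
proof -
  interpret polyhedral_cart_norm N by unfold_locales (rule assms(1))
  let ?W = "norming_matrices N P0"
  have "k * (CARD('n) - k) \<le> dim (projection_directions Y)"
    using dim_projection_directions_ge[OF assms(2)] assms(3) by simp
  also have "\<dots> \<le> dim (projection_directions Y \<inter> {A. \<forall>w\<in>?W. w \<bullet> A = 0}) + card ?W"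
    by (rule dim_le_dim_Int_orthogonal_add_card[OF subspace_projection_directions[OF assms(2)]
          finite_norming_matrices])
  finally have "int (k * (CARD('n) - k)) \<le> aff_dim (min_projections N Y) + int (card ?W)"
    using aff_dim_min_projections_ge[OF assms(2,6)] by linarith
  moreover have "2 * card ?W \<le> m"
    using card_norming_matrices_le_half[of P0] assms(7) by linarith
  moreover have "1 \<le> card ?W"
    using finite_norming_matrices norming_matrices_nonempty by (simp add: Suc_le_eq card_gt_0_iff)
  ultimately show ?thesis by linarith
qed

end
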